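(* For every state $s$ (closed term of type $\mathsf{State}$), the pair $(\Vdash^s_{\mathcal{IR}},\Vdash^s)$ is a monadic realizability relation for the syntactic monad $\mathcal{IR}$; that is, (MR1) if $r\Vdash^s A$ then $\mathsf{unit}\,r\Vdash^s_{\mathcal{IR}}A$; (MR2) if $r\Vdash^s B\to C$ then $\mathsf{star}\,r\,p\Vdash^s_{\mathcal{IR}}C$ for every $p:\|B\|$ with $p\Vdash^s_{\mathcal{IR}}B$; (MR3) if $p\Vdash^s_{\mathcal{IR}}B$ and $q\Vdash^s_{\mathcal{IR}}C$ then $\mathsf{merge}\,p\,q\Vdash^s_{\mathcal{IR}}B\wedge C$ (for all closed formulas $A,B,C$).
   Context: System $T'$: simply typed $\lambda$-calculus with types from atomic types $\mathsf{Unit},\mathsf{Nat},\mathsf{State},\mathsf{Ex}$ (and others) by $\to,\times,+$; constants $\star$, $\langle\cdot,\cdot\rangle$, $\pi_1,\pi_2$, $\mathrm{inl},\mathrm{inr}$, $\mathrm{case}$, $0$, $\mathrm{succ}$, a bounded recursor, and $\mathsf{exmerge}:\mathsf{Ex}\to\mathsf{Ex}\to\mathsf{Ex}$; usual $\beta$, projection and case reductions; $t\leadsto u$: $t$ reduces to $u$; $\bar n$ numerals. States and exceptions: each closed $s:\mathsf{State}$ denotes a finite partial function $[\![s]\!]$ from pairs (a $(k+1)$-ary predicate symbol $P$, a tuple $(m_1,\dots,m_k)\in\mathbb N^k$) to $\mathbb N$ which is sound: $[\![s]\!](P,\vec m)=m$ implies $P(\vec m,m)$. States are ordered by extension $\le$.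 Each closed $e:\mathsf{Ex}$ denotes a partial function $[\![e]\!]$ on states with $s\le[\![e]\!](s)$ whenever defined. $e$ properly extends $s$ iff $[\![e]\!](s)$ is defined and $s<[\![e]\!](s)$. $\mathsf{exmerge}$ satisfies (EX): if $e_1$ and $e_2$ both properly extend $s$ then $\mathsf{exmerge}\,e_1\,e_2$ properly extends $s$. Monad $\mathcal{IR}$: $\mathsf TX=\mathsf{State}\to(X+\mathsf{Ex})$; $\mathsf{unit}=\lambda x\lambda\_.\mathrm{inl}\,x$; $\mathsf{star}=\lambda f\lambda a\lambda s.\mathrm{case}(as)(\lambda x.fxs)\mathrm{inr}$; $\mathsf{merge}=\lambda a\lambda b\lambda s.\mathrm{case}(as)(\lambda x.\mathrm{case}(bs)(\lambda y.\mathrm{inl}\langle x,y\rangle)\mathrm{inr})(\lambda e_1.\mathrm{case}(bs)(\lambda\_.\mathrm{inr}\,e_1)(\lambda e_2.\mathrm{inr}(\mathsf{exmerge}\,e_1e_2)))$. Formulas: first-order arithmetic, decidable atomic predicates, $\bot$ atomic never true. Types: $\|A\|=\mathsf T|A|$, $|P|=\mathsf{Unit}$, $|B\wedge C|=|B|\times|C|$, $|B\vee C|=|B|+|C|$, $|\exists xB|=\mathsf{Nat}\times|B|$, $|B\to C|=|B|\to\|C\|$, $|\forall xB|=\mathsf{Nat}\to\|B\|$. Interactive realizability relations (simultaneous induction on closed $A$): $p\Vdash^s_{\mathcal{IR}}A$ (for $p:\|A\|$) iff either $p\,s\leadsto\mathrm{inl}\,r$ with $r\Vdash^sA$, or $p\,s\leadsto\mathrm{inr}\,e$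 with $e$ properly extending $s$; and $r\Vdash^sP$ iff $r\leadsto\star$ and $P$ true; $r\Vdash^sB\wedge C$ iff $\pi_1r\Vdash^sB$ and $\pi_2r\Vdash^sC$; $r\Vdash^sB\vee C$ iff $r\leadsto\mathrm{inl}\,a$ with $a\Vdash^sB$ or $r\leadsto\mathrm{inr}\,b$ with $b\Vdash^sC$; $r\Vdash^sB\to C$ iff $rp\Vdash^s_{\mathcal{IR}}C$ for all $p\Vdash^sB$; $r\Vdash^s\forall xB$ iff $r\bar n\Vdash^s_{\mathcal{IR}}B[x:=\bar n]$ for all $n$; $r\Vdash^s\exists xB$ iff $\pi_2r\Vdash^sB[x:=\pi_1r]$. *)

theory Defs
  imports Main
begin

datatype ty = TUnit | TNat | TState | TEx | TBase nat
  | TFun ty ty | TProd ty ty | TSum ty ty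

datatype const = CStar | CPair | CFst | CSnd | CInl | CInr | CCase
  | CZero | CSucc | CRec | CExmerge

text \<open>Terms: de Bruijn bound variables (Var), named first-order variables
 (FVar, used only inside formulas, of type Nat), built-in constants (Cst) and
 further typed constants (Ext c, of type cty c), e.g. constants of type State/Ex.\<close>
datatype 'c trm = Var nat | FVar nat | Lam "'c trm" | App "'c trm" "'c trm"
  | Cst const | Ext 'c

inductive ctyp :: "const \<Rightarrow> ty \<Rightarrow> bool" where
  "ctyp CStar TUnit"
| "ctyp CPair (TFun A (TFun B (TProd A B)))"
| "ctyp CFst (TFun (TProd A B) A)"
| "ctyp CSnd (TFun (TProd A B) B)"
| "ctyp CInl (TFun A (TSum A B))"
| "ctyp CInr (TFun B (TSum A B))"
| "ctyp CCase (TFun (TSum A B) (TFun (TFun A C) (TFun (TFun B C) C)))"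
| "ctyp CZero TNat"
| "ctyp CSucc (TFun TNat TNat)"
| "ctyp CRec (TFun A (TFun (TFun TNat (TFun A A)) (TFun TNat A)))"
| "ctyp CExmerge (TFun TEx (TFun TEx TEx))"

inductive typing :: "('c \<Rightarrow> ty) \<Rightarrow> ty list \<Rightarrow> 'c trm \<Rightarrow> ty \<Rightarrow> bool" where
  "i < length \<Gamma> \<Longrightarrow> typing cty \<Gamma> (Var i) (\<Gamma> ! i)"
| "typing cty \<Gamma> (FVar x) TNat"
| "typing cty (A # \<Gamma>) t B \<Longrightarrow> typing cty \<Gamma> (Lam t) (TFun A B)"
| "typing cty \<Gamma> t (TFun A B) \<Longrightarrow> typing cty \<Gamma> u A \<Longrightarrow> typing cty \<Gamma> (App t u) B"
| "ctyp c T \<Longrightarrow> typing cty \<Gamma> (Cst c) T"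
| "typing cty \<Gamma> (Ext c) (cty c)"

fun bclosed :: "nat \<Rightarrow> 'c trm \<Rightarrow> bool" where
  "bclosed k (Var i) = (i < k)"
| "bclosed k (FVar x) = False"
| "bclosed k (Lam t) = bclosed (Suc k) t"
| "bclosed k (App t u) = (bclosed k t \<and> bclosed k u)"
| "bclosed k (Cst c) = True"
| "bclosed k (Ext c) = True"

definition closed :: "'c trm \<Rightarrow> bool" where
  "closed t \<longleftrightarrow> bclosed 0 t"

fun lift :: "nat \<Rightarrow> 'c trm \<Rightarrow> 'c trm" where
  "lift k (Var i) = (if i < k then Var i else Var (Suc i))"
| "lift k (FVar x) = FVar x"
| "lift k (Lam t) = Lam (lift (Suc k) t)"
| "lift k (App t u) = App (lift k t) (lift k u)"
| "lift k (Cst c) = Cst c"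
| "lift k (Ext c) = Ext c"

fun subst :: "'c trm \<Rightarrow> nat \<Rightarrow> 'c trm \<Rightarrow> 'c trm" where
  "subst (Var i) k u = (if i < k then Var i else if i = k then u else Var (i - 1))"
| "subst (FVar x) k u = FVar x"
| "subst (Lam t) k u = Lam (subst t (Suc k) (lift 0 u))"
| "subst (App t v) k u = App (subst t k u) (subst v k u)"
| "subst (Cst c) k u = Cst c"
| "subst (Ext c) k u = Ext c"

abbreviation app2 :: "'c trm \<Rightarrow> 'c trm \<Rightarrow> 'c trm \<Rightarrow> 'c trm" where
  "app2 f a b \<equiv> App (App f a) b"
abbreviation app3 :: "'c trm \<Rightarrow> 'c trm \<Rightarrow> 'c trm \<Rightarrow> 'c trm \<Rightarrow> 'c trm" where
  "app3 f a b c \<equiv> App (App (App f a) b) c"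

inductive red1 :: "'c trm \<Rightarrow> 'c trm \<Rightarrow> bool" where
  beta: "red1 (App (Lam t) u) (subst t 0 u)"
| fst: "red1 (App (Cst CFst) (app2 (Cst CPair) a b)) a"
| snd: "red1 (App (Cst CSnd) (app2 (Cst CPair) a b)) b"
| case_inl: "red1 (app3 (Cst CCase) (App (Cst CInl) a) f g) (App f a)"
| case_inr: "red1 (app3 (Cst CCase) (App (Cst CInr) b) f g) (App g b)"
| rec_0: "red1 (app3 (Cst CRec) u v (Cst CZero)) u"
| rec_S: "red1 (app3 (Cst CRec) u v (App (Cst CSucc) n))
                (app2 v n (app3 (Cst CRec) u v n))"
| appL: "red1 t t' \<Longrightarrow> red1 (App t u) (App t' u)"
| appR: "red1 u u' \<Longrightarrow> red1 (App t u) (App t u')"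
| lam: "red1 t t' \<Longrightarrow> red1 (Lam t) (Lam t')"

definition reduces :: "'c trm \<Rightarrow> 'c trm \<Rightarrow> bool" (infix "\<leadsto>" 50) where
  "t \<leadsto> u \<longleftrightarrow> red1\<^sup>*\<^sup>* t u"

fun numeral_t :: "nat \<Rightarrow> 'c trm" where
  "numeral_t 0 = Cst CZero"
| "numeral_t (Suc n) = App (Cst CSucc) (numeral_t n)"

text \<open>A (k+1)-ary predicate symbol P is identified with its (decidable)
 relation on tuples; a state is a partial function from (P, tuple) to nat.\<close>
type_synonym state = "((nat list \<Rightarrow> bool) \<times> nat list) \<rightharpoonup> nat"

definition is_state :: "state \<Rightarrow> bool" where
  "is_state \<sigma> \<longleftrightarrow> finite (dom \<sigma>) \<and> (\<forall>P ms m. \<sigma> (P, ms) = Some m \<longrightarrow> P (ms @ [m]))"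

definition prop_extends ::
  "('c trm \<Rightarrow> state) \<Rightarrow> ('c trm \<Rightarrow> state \<rightharpoonup> state) \<Rightarrow> 'c trm \<Rightarrow> 'c trm \<Rightarrow> bool" where
  "prop_extends dst dex e s \<longleftrightarrow>
     (\<exists>\<sigma>. dex e (dst s) = Some \<sigma> \<and> dst s \<subseteq>\<^sub>m \<sigma> \<and> dst s \<noteq> \<sigma>)"

text \<open>Atoms carry a decidable relation on nat and a list of T' terms of type Nat;
 falsum is the atom with the always-false relation.\<close>
datatype 'c fm = Atom "nat list \<Rightarrow> bool" "'c trm list"
  | Conj "'c fm" "'c fm" | Disj "'c fm" "'c fm" | Imp "'c fm" "'c fm"
  | Forall nat "'c fm" | Exists nat "'c fm"

definition Falsum :: "'c fm" where "Falsum = Atom (\<lambda>_. False) []"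

fun tsubstfv :: "nat \<Rightarrow> 'c trm \<Rightarrow> 'c trm \<Rightarrow> 'c trm" where
  "tsubstfv x u (Var i) = Var i"
| "tsubstfv x u (FVar y) = (if y = x then u else FVar y)"
| "tsubstfv x u (Lam t) = Lam (tsubstfv x u t)"
| "tsubstfv x u (App t v) = App (tsubstfv x u t) (tsubstfv x u v)"
| "tsubstfv x u (Cst c) = Cst c"
| "tsubstfv x u (Ext c) = Ext c"

text \<open>Substitution B[x := u] (u will always be closed, so no capture).\<close>
fun fsubst :: "nat \<Rightarrow> 'c trm \<Rightarrow> 'c fm \<Rightarrow> 'c fm" where
  "fsubst x u (Atom P ts) = Atom P (map (tsubstfv x u) ts)"
| "fsubst x u (Conj A B) = Conj (fsubst x u A) (fsubst x u B)"
| "fsubst x u (Disj A B) = Disj (fsubst x u A) (fsubst x u B)"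
| "fsubst x u (Imp A B) = Imp (fsubst x u A) (fsubst x u B)"
| "fsubst x u (Forall y A) = (if y = x then Forall y A else Forall y (fsubst x u A))"
| "fsubst x u (Exists y A) = (if y = x then Exists y A else Exists y (fsubst x u A))"

fun tfv :: "'c trm \<Rightarrow> nat set" where
  "tfv (FVar y) = {y}"
| "tfv (Lam t) = tfv t"
| "tfv (App t u) = tfv t \<union> tfv u"
| "tfv _ = {}"

fun ffv :: "'c fm \<Rightarrow> nat set" where
  "ffv (Atom P ts) = (\<Union>t\<in>set ts. tfv t)"
| "ffv (Conj A B) = ffv A \<union> ffv B"
| "ffv (Disj A B) = ffv A \<union> ffv B"
| "ffv (Imp A B) = ffv A \<union> ffv B"
| "ffv (Forall y A) = ffv A - {y}"
| "ffv (Exists y A) = ffv A - {y}"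

definition closed_fm :: "'c fm \<Rightarrow> bool" where
  "closed_fm A \<longleftrightarrow> ffv A = {}"

definition atom_true :: "(nat list \<Rightarrow> bool) \<Rightarrow> 'c trm list \<Rightarrow> bool" where
  "atom_true P ts \<longleftrightarrow> (\<exists>ns. list_all2 (\<lambda>t n. t \<leadsto> numeral_t n) ts ns \<and> P ns)"

fun fsize :: "'c fm \<Rightarrow> nat" where
  "fsize (Atom P ts) = 1"
| "fsize (Conj A B) = Suc (fsize A + fsize B)"
| "fsize (Disj A B) = Suc (fsize A + fsize B)"
| "fsize (Imp A B) = Suc (fsize A + fsize B)"
| "fsize (Forall y A) = Suc (fsize A)"
| "fsize (Exists y A) = Suc (fsize A)"

lemma fsize_fsubst[simp]: "fsize (fsubst x u A) = fsize A"
  by (induction A) auto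

definition TM :: "ty \<Rightarrow> ty" where "TM X = TFun TState (TSum X TEx)"

fun rty :: "'c fm \<Rightarrow> ty" where
  "rty (Atom P ts) = TUnit"
| "rty (Conj A B) = TProd (rty A) (rty B)"
| "rty (Disj A B) = TSum (rty A) (rty B)"
| "rty (Imp A B) = TFun (rty A) (TM (rty B))"
| "rty (Forall y A) = TFun TNat (TM (rty A))"
| "rty (Exists y A) = TProd TNat (rty A)"

definition unitT :: "'c trm" where
  "unitT = Lam (Lam (App (Cst CInl) (Var 1)))"

text \<open>star = \<lambda>f \<lambda>a \<lambda>s. case (a s) (\<lambda>x. f x s) inr\<close>
definition starT :: "'c trm" where
  "starT = Lam (Lam (Lam (app3 (Cst CCase) (App (Var 1) (Var 0))
              (Lam (app2 (Var 3) (Var 0) (Var 1))) (Cst CInr))))"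

text \<open>merge = \<lambda>a \<lambda>b \<lambda>s. case (a s) (\<lambda>x. case (b s) (\<lambda>y. inl \<langle>x,y\<rangle>) inr)
   (\<lambda>e1. case (b s) (\<lambda>_. inr e1) (\<lambda>e2. inr (exmerge e1 e2)))\<close>
definition mergeT :: "'c trm" where
  "mergeT = Lam (Lam (Lam (app3 (Cst CCase) (App (Var 2) (Var 0))
     (Lam (app3 (Cst CCase) (App (Var 2) (Var 1))
              (Lam (App (Cst CInl) (app2 (Cst CPair) (Var 1) (Var 0))))
              (Cst CInr)))
     (Lam (app3 (Cst CCase) (App (Var 2) (Var 1))
              (Lam (App (Cst CInr) (Var 1)))
              (Lam (App (Cst CInr) (app2 (Cst CExmerge) (Var 1) (Var 0)))))))))"

text \<open>real cty dst dex s A r  is  r \<Vdash>^s A ; the clauses for \<rightarrow> and \<forall> contain the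
 unfolded definition of \<Vdash>^s_IR (see realIR below).\<close>
function real :: "('c \<Rightarrow> ty) \<Rightarrow> ('c trm \<Rightarrow> state) \<Rightarrow> ('c trm \<Rightarrow> state \<rightharpoonup> state)
                  \<Rightarrow> 'c trm \<Rightarrow> 'c fm \<Rightarrow> 'c trm \<Rightarrow> bool" where
  "real cty dst dex s (Atom P ts) r = (r \<leadsto> Cst CStar \<and> atom_true P ts)"
| "real cty dst dex s (Conj B C) r =
     (real cty dst dex s B (App (Cst CFst) r) \<and> real cty dst dex s C (App (Cst CSnd) r))"
| "real cty dst dex s (Disj B C) r =
     ((\<exists>a. r \<leadsto> App (Cst CInl) a \<and> real cty dst dex s B a) \<or>
      (\<exists>b. r \<leadsto> App (Cst CInr) b \<and> real cty dst dex s C b))"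
| "real cty dst dex s (Imp B C) r =
     (\<forall>p. closed p \<and> typing cty [] p (rty B) \<and> real cty dst dex s B p \<longrightarrow>
        ((\<exists>r'. App (App r p) s \<leadsto> App (Cst CInl) r' \<and> real cty dst dex s C r') \<or>
         (\<exists>e. App (App r p) s \<leadsto> App (Cst CInr) e \<and> prop_extends dst dex e s)))"
| "real cty dst dex s (Forall x B) r =
     (\<forall>n. (\<exists>r'. App (App r (numeral_t n)) s \<leadsto> App (Cst CInl) r' \<and>
                real cty dst dex s (fsubst x (numeral_t n) B) r') \<or>
          (\<exists>e. App (App r (numeral_t n)) s \<leadsto> App (Cst CInr) e \<and> prop_extends dst dex e s))"
| "real cty dst dex s (Exists x B) r =
     real cty dst dex s (fsubst x (App (Cst CFst) r) B) (App (Cst CSnd) r)"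
  by pat_completeness auto
termination
  by (relation "measure (\<lambda>(cty, dst, dex, s, A, r). fsize A)") auto

definition realIR :: "('c \<Rightarrow> ty) \<Rightarrow> ('c trm \<Rightarrow> state) \<Rightarrow> ('c trm \<Rightarrow> state \<rightharpoonup> state)
                  \<Rightarrow> 'c trm \<Rightarrow> 'c fm \<Rightarrow> 'c trm \<Rightarrow> bool" where
  "realIR cty dst dex s A p \<longleftrightarrow>
     (\<exists>r. App p s \<leadsto> App (Cst CInl) r \<and> real cty dst dex s A r) \<or>
     (\<exists>e. App p s \<leadsto> App (Cst CInr) e \<and> prop_extends dst dex e s)"

end

theory Submission
  imports Defs
begin

text \<open>MR1 and MR2 are computations: applied to a state, \<open>unit r\<close> reduces to \<open>inl r\<close>,
  and \<open>star r p\<close> reduces to \<open>r x s\<close> or \<open>inr e\<close> according to the outcome of \<open>p s\<close>;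
  subject reduction keeps \<open>x\<close> and \<open>e\<close> closed and well typed, so the clauses of
  realizability apply to them. In MR3, when \<open>p s\<close> and \<open>q s\<close> return values \<open>x\<close> and \<open>y\<close>,
  merge returns \<open>\<langle>x,y\<rangle>\<close>, and one needs that \<open>\<pi>\<^sub>1\<langle>x,y\<rangle>\<close> realizes \<open>B\<close> whenever \<open>x\<close> does.
  Realizers are closed under backward reduction, except that the clause for \<open>\<exists>\<close> substitutes
  the realizer into the formula; so one also needs that contracting projection redexes inside
  a formula does not change what realizes it. For atoms this holds because parallel
  contraction of projection redexes commutes with reduction and hence preserves reduction to
  numerals. When both \<open>p s\<close> and \<open>q s\<close> raise exceptions, (EX) handles their merge.\<close>

section \<open>Closed terms and subject reduction\<close>

lemma lift_bclosed: "bclosed k t \<Longrightarrow> k \<le> j \<Longrightarrow> lift j t = t"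
  by (induction t arbitrary: k j) auto

lemma subst_bclosed: "bclosed k t \<Longrightarrow> k \<le> j \<Longrightarrow> subst t j u = t"
  by (induction t arbitrary: k j u) auto

lemma closed_lift [simp]: "closed t \<Longrightarrow> lift j t = t"
  unfolding closed_def using lift_bclosed by blast

lemma closed_subst [simp]: "closed t \<Longrightarrow> subst t j u = t"
  unfolding closed_def using subst_bclosed by blast

lemma bclosed_lift: "bclosed k u \<Longrightarrow> bclosed (Suc k) (lift j u)"
  by (induction u arbitrary: k j) auto

lemma bclosed_subst:
  "bclosed (Suc k) t \<Longrightarrow> bclosed k u \<Longrightarrow> j \<le> k \<Longrightarrow> bclosed k (subst t j u)"
  by (induction t arbitrary: k u j) (auto simp: bclosed_lift)

lemma red1_bclosed: "red1 t t' \<Longrightarrow> bclosed k t \<Longrightarrow> bclosed k t'"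
  by (induction arbitrary: k rule: red1.induct) (auto simp: bclosed_subst)

lemma reduces_closed: "t \<leadsto> t' \<Longrightarrow> closed t \<Longrightarrow> closed t'"
  unfolding reduces_def closed_def
  by (induction rule: rtranclp_induct) (auto simp: red1_bclosed)

lemma typing_Var: "i < length \<Gamma> \<Longrightarrow> \<Gamma> ! i = T \<Longrightarrow> typing cty \<Gamma> (Var i) T"
  using typing.intros(1) by blast

inductive_cases typing_AppE: "typing cty \<Gamma> (App t u) T"
inductive_cases typing_LamE: "typing cty \<Gamma> (Lam t) T"
inductive_cases typing_CstE: "typing cty \<Gamma> (Cst c) T"

lemma typing_lift:
  "typing cty \<Gamma> t T \<Longrightarrow> k \<le> length \<Gamma> \<Longrightarrow>
   typing cty (take k \<Gamma> @ U # drop k \<Gamma>) (lift k t) T"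
proof (induction arbitrary: k rule: typing.induct)
  case (1 i \<Gamma> cty)
  then show ?case by (auto intro!: typing_Var simp: nth_append min_def)
next
  case (3 cty A \<Gamma> t B)
  then show ?case using typing.intros(3)[of cty A "take k \<Gamma> @ U # drop k \<Gamma>"]
    by (metis Suc_le_mono append_Cons drop_Suc_Cons length_Cons lift.simps(3) take_Suc_Cons)
qed (auto intro: typing.intros)

lemma typing_subst:
  "typing cty \<Delta> t T \<Longrightarrow> \<Delta> = take k \<Gamma> @ U # drop k \<Gamma> \<Longrightarrow> k \<le> length \<Gamma> \<Longrightarrow>
   typing cty \<Gamma> u U \<Longrightarrow> typing cty \<Gamma> (subst t k u) T"
proof (induction arbitrary: \<Gamma> k u rule: typing.induct)
  case (1 i \<Delta> cty)
  then show ?case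
    by (cases i k rule: linorder_cases)
       (auto intro!: typing_Var simp: nth_append min_def nth_Cons' split: if_splits)
next
  case (3 cty A \<Delta> t B)
  have "typing cty (A # \<Gamma>) (lift 0 u) U" using typing_lift[OF 3(5), of 0 A] by simp
  moreover have "A # \<Delta> = take (Suc k) (A # \<Gamma>) @ U # drop (Suc k) (A # \<Gamma>)" using 3 by simp
  ultimately show ?case using 3 by (auto intro!: typing.intros)
next
  case (4 cty \<Delta> t A B u)
  then show ?case using typing.intros(4) by (metis subst.simps(4))
qed (auto intro: typing.intros)

lemma red1_typing: "red1 t t' \<Longrightarrow> typing cty \<Gamma> t T \<Longrightarrow> typing cty \<Gamma> t' T"
proof (induction arbitrary: \<Gamma> T rule: red1.induct)
  case (beta t u)
  then show ?case by (auto elim!: typing_AppE typing_LamE intro: typing_subst[where k = 0])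
qed (fastforce elim!: typing_AppE typing_CstE typing_LamE simp: ctyp.simps
               intro: typing.intros ctyp.intros)+

lemma reduces_typing: "t \<leadsto> t' \<Longrightarrow> typing cty \<Gamma> t T \<Longrightarrow> typing cty \<Gamma> t' T"
  unfolding reduces_def by (induction rule: rtranclp_induct) (auto simp: red1_typing)

lemma reduces_refl [intro]: "t \<leadsto> t"
  unfolding reduces_def by simp

lemma reduces_trans [trans]: "t \<leadsto> u \<Longrightarrow> u \<leadsto> v \<Longrightarrow> t \<leadsto> v"
  unfolding reduces_def by simp

lemma red1_reduces_trans: "red1 t u \<Longrightarrow> u \<leadsto> v \<Longrightarrow> t \<leadsto> v"
  unfolding reduces_def by (simp add: converse_rtranclp_into_rtranclp)

lemma reduces_AppL: "t \<leadsto> t' \<Longrightarrow> App t u \<leadsto> App t' u"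
  unfolding reduces_def
  by (induction rule: rtranclp_induct) (auto intro: rtranclp.rtrancl_into_rtrancl red1.appL)

lemma reduces_AppR: "u \<leadsto> u' \<Longrightarrow> App t u \<leadsto> App t u'"
  unfolding reduces_def
  by (induction rule: rtranclp_induct) (auto intro: rtranclp.rtrancl_into_rtrancl red1.appR)

lemma reduces_Lam: "t \<leadsto> t' \<Longrightarrow> Lam t \<leadsto> Lam t'"
  unfolding reduces_def
  by (induction rule: rtranclp_induct) (auto intro: rtranclp.rtrancl_into_rtrancl red1.lam)

lemma reduces_App: "t \<leadsto> t' \<Longrightarrow> u \<leadsto> u' \<Longrightarrow> App t u \<leadsto> App t' u'"
  using reduces_AppL reduces_AppR reduces_trans by blast

lemma reduces_Inl_closed_typing:
  "t \<leadsto> App (Cst CInl) a \<Longrightarrow> closed t \<Longrightarrow> typing cty [] t (TSum A B) \<Longrightarrow>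
   closed a \<and> typing cty [] a A"
  by (fastforce dest: reduces_closed reduces_typing elim!: typing_AppE typing_CstE
                simp: ctyp.simps closed_def)

lemma reduces_Inr_closed_typing:
  "t \<leadsto> App (Cst CInr) b \<Longrightarrow> closed t \<Longrightarrow> typing cty [] t (TSum A B) \<Longrightarrow>
   closed b \<and> typing cty [] b B"
  by (fastforce dest: reduces_closed reduces_typing elim!: typing_AppE typing_CstE
                simp: ctyp.simps closed_def)

section \<open>Parallel contraction of projection redexes\<close>

inductive proj_red :: "'c trm \<Rightarrow> 'c trm \<Rightarrow> bool" where
  var: "proj_red (Var i) (Var i)"
| fvar: "proj_red (FVar x) (FVar x)"
| cst: "proj_red (Cst c) (Cst c)"
| ext: "proj_red (Ext c) (Ext c)"
| lam: "proj_red t t' \<Longrightarrow> proj_red (Lam t) (Lam t')"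
| app: "proj_red t t' \<Longrightarrow> proj_red u u' \<Longrightarrow> proj_red (App t u) (App t' u')"
| fst: "proj_red a a' \<Longrightarrow> proj_red (App (Cst CFst) (app2 (Cst CPair) a b)) a'"
| snd: "proj_red b b' \<Longrightarrow> proj_red (App (Cst CSnd) (app2 (Cst CPair) a b)) b'"

lemma proj_red_refl [intro]: "proj_red t t"
  by (induction t) (auto intro: proj_red.intros)

lemma proj_red_reduces: "proj_red t t' \<Longrightarrow> t \<leadsto> t'"
  by (induction rule: proj_red.induct)
     (auto intro: reduces_Lam reduces_App red1_reduces_trans red1.fst red1.snd)

lemma proj_red_lift: "proj_red t t' \<Longrightarrow> proj_red (lift k t) (lift k t')"
  by (induction arbitrary: k rule: proj_red.induct) (auto intro: proj_red.intros)

lemma proj_red_subst: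
  "proj_red t t' \<Longrightarrow> proj_red u u' \<Longrightarrow> proj_red (subst t k u) (subst t' k u')"
proof (induction arbitrary: k u u' rule: proj_red.induct)
  case (lam t t')
  then show ?case by (simp add: proj_red.lam proj_red_lift)
qed (auto intro: proj_red.intros)

lemma proj_red_tsubstfv:
  "proj_red t t' \<Longrightarrow> proj_red u u' \<Longrightarrow> proj_red (tsubstfv x u t) (tsubstfv x u' t')"
  by (induction rule: proj_red.induct) (auto intro: proj_red.intros)

inductive_cases proj_red_AppE: "proj_red (App t u) z"
inductive_cases proj_red_LamE: "proj_red (Lam t) z"
inductive_cases proj_red_CstE: "proj_red (Cst c) z"
inductive_cases red1_AppE: "red1 (App t u) z"
inductive_cases red1_CstE: "red1 (Cst c) z"

lemma proj_red_Cst_iff [simp]: "proj_red (Cst c) z \<longleftrightarrow> z = Cst c"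
  by (auto elim: proj_red_CstE intro: proj_red.intros)

lemma red1_Cst [simp]: "\<not> red1 (Cst c) z"
  by (auto elim: red1_CstE)

lemma proj_red_App_cases:
  assumes "proj_red (App t u) z"
  obtains (app) t' u' where "z = App t' u'" "proj_red t t'" "proj_red u u'"
    | (fst) a b where "t = Cst CFst" "u = app2 (Cst CPair) a b" "proj_red a z"
    | (snd) a b where "t = Cst CSnd" "u = app2 (Cst CPair) a b" "proj_red b z"
  using assms by (auto elim: proj_red_AppE)

lemma proj_red_App_no_redex:
  "proj_red (App t u) z \<Longrightarrow> t \<noteq> Cst CFst \<Longrightarrow> t \<noteq> Cst CSnd \<Longrightarrow>
   \<exists>t' u'. z = App t' u' \<and> proj_red t t' \<and> proj_red u u'"
  by (auto elim: proj_red_App_cases)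

lemma proj_red_Pair:
  "proj_red (app2 (Cst CPair) a b) z \<Longrightarrow>
   \<exists>a' b'. z = app2 (Cst CPair) a' b' \<and> proj_red a a' \<and> proj_red b b'"
  by (auto dest!: proj_red_App_no_redex)

lemma proj_red_numeral: "proj_red (numeral_t n) z \<Longrightarrow> z = numeral_t n"
  by (induction n arbitrary: z) (auto dest!: proj_red_App_no_redex)

lemma red1_Pair:
  "red1 (app2 (Cst CPair) a b) z \<Longrightarrow>
   \<exists>a' b'. z = app2 (Cst CPair) a' b'"
  by (auto elim!: red1_AppE)

lemma reduces_Pair:
  "app2 (Cst CPair) a b \<leadsto> z \<Longrightarrow> \<exists>a' b'. z = app2 (Cst CPair) a' b' \<and> a \<leadsto> a' \<and> b \<leadsto> b'"
  unfolding reduces_def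
proof (induction rule: rtranclp_induct)
  case (step y z)
  then show ?case by (auto elim!: red1_AppE intro: rtranclp.rtrancl_into_rtrancl)
qed auto

lemma proj_red_Fst_redex:
  "proj_red (App (Cst CFst) (app2 (Cst CPair) a b)) z \<Longrightarrow> \<exists>a'. z \<leadsto> a' \<and> proj_red a a'"
  by (auto elim!: proj_red_AppE dest!: proj_red_Pair) (blast intro: red1_reduces_trans[OF red1.fst])

lemma proj_red_Snd_redex:
  "proj_red (App (Cst CSnd) (app2 (Cst CPair) a b)) z \<Longrightarrow> \<exists>b'. z \<leadsto> b' \<and> proj_red b b'"
  by (auto elim!: proj_red_AppE dest!: proj_red_Pair) (blast intro: red1_reduces_trans[OF red1.snd])

lemma proj_red_commute_Fst_arg:
  assumes IH: "\<And>z. proj_red (app2 (Cst CPair) a b) z \<Longrightarrow> \<exists>v. z \<leadsto> v \<and> proj_red u' v"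
    and step: "red1 (app2 (Cst CPair) a b) u'"
    and "proj_red a z"
  shows "\<exists>v. z \<leadsto> v \<and> proj_red (App (Cst CFst) u') v"
proof -
  obtain v where v: "app2 (Cst CPair) z b \<leadsto> v" "proj_red u' v"
    using IH[of "app2 (Cst CPair) z b"] assms(3) by (blast intro: proj_red.intros)
  obtain a2 b2 where "v = app2 (Cst CPair) a2 b2" "z \<leadsto> a2"
    using reduces_Pair[OF v(1)] by blast
  moreover obtain a1 b1 where "u' = app2 (Cst CPair) a1 b1"
    using red1_Pair[OF step] by blast
  ultimately show ?thesis using v(2) by (auto dest!: proj_red_Pair intro: proj_red.fst)
qed

lemma proj_red_commute_Snd_arg:
  assumes IH: "\<And>z. proj_red (app2 (Cst CPair) a b) z \<Longrightarrow> \<exists>v. z \<leadsto> v \<and> proj_red u' v"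
    and step: "red1 (app2 (Cst CPair) a b) u'"
    and "proj_red b z"
  shows "\<exists>v. z \<leadsto> v \<and> proj_red (App (Cst CSnd) u') v"
proof -
  obtain v where v: "app2 (Cst CPair) a z \<leadsto> v" "proj_red u' v"
    using IH[of "app2 (Cst CPair) a z"] assms(3) by (blast intro: proj_red.intros)
  obtain a2 b2 where "v = app2 (Cst CPair) a2 b2" "z \<leadsto> b2"
    using reduces_Pair[OF v(1)] by blast
  moreover obtain a1 b1 where "u' = app2 (Cst CPair) a1 b1"
    using red1_Pair[OF step] by blast
  ultimately show ?thesis using v(2) by (auto dest!: proj_red_Pair intro: proj_red.snd)
qed

lemma red1_proj_red_commute: "red1 t u \<Longrightarrow> proj_red t t' \<Longrightarrow> \<exists>u'. t' \<leadsto> u' \<and> proj_red u u'"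
proof (induction arbitrary: t' rule: red1.induct)
  case (beta t u)
  then show ?case
    by (auto dest!: proj_red_App_no_redex elim!: proj_red_LamE
             intro!: red1_reduces_trans[OF red1.beta] proj_red_subst)
next
  case (fst a b)
  then show ?case by (rule proj_red_Fst_redex)
next
  case (snd a b)
  then show ?case by (rule proj_red_Snd_redex)
next
  case (appL t t2 u)
  then show ?case by (force dest!: proj_red_App_no_redex intro: reduces_AppL proj_red.app)
next
  case (appR u u' t)
  from appR.prems show ?case
  proof (cases rule: proj_red_App_cases)
    case (app t1 u1)
    then show ?thesis using appR.IH by (force intro: reduces_AppR proj_red.app)
  next
    case (fst a b)
    then show ?thesis using appR proj_red_commute_Fst_arg by blast
  next
    case (snd a b)
    then show ?thesis using appR proj_red_commute_Snd_arg by blast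
  qed
next
  case (lam t t')
  then show ?case by (auto elim!: proj_red_LamE intro: reduces_Lam proj_red.intros)
qed (auto dest!: proj_red_App_no_redex;
     blast intro: red1_reduces_trans[OF red1.case_inl] red1_reduces_trans[OF red1.case_inr]
                  red1_reduces_trans[OF red1.rec_0] red1_reduces_trans[OF red1.rec_S]
                  proj_red.intros)+

lemma reduces_proj_red_commute: "t \<leadsto> u \<Longrightarrow> proj_red t t' \<Longrightarrow> \<exists>u'. t' \<leadsto> u' \<and> proj_red u u'"
  unfolding reduces_def
proof (induction arbitrary: t' rule: rtranclp_induct)
  case (step y z)
  then obtain y' where "red1\<^sup>*\<^sup>* t' y'" "proj_red y y'" by blast
  with red1_proj_red_commute[OF step(2)] show ?case
    unfolding reduces_def by (meson rtranclp_trans)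
qed auto

lemma proj_red_reduces_numeral_iff:
  "proj_red t t' \<Longrightarrow> t \<leadsto> numeral_t n \<longleftrightarrow> t' \<leadsto> numeral_t n"
  by (metis proj_red_numeral proj_red_reduces reduces_proj_red_commute reduces_trans)

section \<open>Invariance of realizers\<close>

inductive fm_proj_red :: "'c fm \<Rightarrow> 'c fm \<Rightarrow> bool" where
  atom: "list_all2 proj_red ts ts' \<Longrightarrow> fm_proj_red (Atom P ts) (Atom P ts')"
| conj: "fm_proj_red A A' \<Longrightarrow> fm_proj_red B B' \<Longrightarrow> fm_proj_red (Conj A B) (Conj A' B')"
| disj: "fm_proj_red A A' \<Longrightarrow> fm_proj_red B B' \<Longrightarrow> fm_proj_red (Disj A B) (Disj A' B')"
| imp: "fm_proj_red A A' \<Longrightarrow> fm_proj_red B B' \<Longrightarrow> fm_proj_red (Imp A B) (Imp A' B')"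
| all: "fm_proj_red A A' \<Longrightarrow> fm_proj_red (Forall x A) (Forall x A')"
| ex: "fm_proj_red A A' \<Longrightarrow> fm_proj_red (Exists x A) (Exists x A')"

lemma fm_proj_red_refl [intro]: "fm_proj_red A A"
  by (induction A) (auto intro: fm_proj_red.intros list_all2_refl)

lemma fm_proj_red_rty: "fm_proj_red A A' \<Longrightarrow> rty A = rty A'"
  by (induction rule: fm_proj_red.induct) auto

lemma fm_proj_red_fsubst:
  "proj_red u u' \<Longrightarrow> fm_proj_red (fsubst x u A) (fsubst x u' A)"
  by (induction A) (auto intro!: fm_proj_red.intros proj_red_tsubstfv simp: list_all2_conv_all_nth)

lemma fm_proj_red_fsubst_fm:
  "fm_proj_red A A' \<Longrightarrow> fm_proj_red (fsubst x u A) (fsubst x u A')"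
  by (induction rule: fm_proj_red.induct)
     (auto intro!: fm_proj_red.intros proj_red_tsubstfv simp: list_all2_conv_all_nth)

lemma atom_true_proj_red_iff:
  assumes "list_all2 proj_red ts ts'"
  shows "atom_true P ts \<longleftrightarrow> atom_true P ts'"
proof -
  have "list_all2 (\<lambda>t n. t \<leadsto> numeral_t n) ts ns \<longleftrightarrow> list_all2 (\<lambda>t n. t \<leadsto> numeral_t n) ts' ns"
    for ns :: "nat list"
    using assms by (auto simp: list_all2_conv_all_nth) (metis proj_red_reduces_numeral_iff)+
  then show ?thesis unfolding atom_true_def by simp
qed

lemma real_fm_proj_red_iff:
  "fm_proj_red A A' \<Longrightarrow> real cty dst dex s A r \<longleftrightarrow> real cty dst dex s A' r"
proof (induction "fsize A" arbitrary: A A' r rule: less_induct)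
  case less
  from less.prems show ?case
  proof cases
    case (atom ts ts' P)
    then show ?thesis using atom_true_proj_red_iff by auto
  next
    case (conj B B' C C')
    then show ?thesis using less.hyps[of B B'] less.hyps[of C C'] by simp
  next
    case (disj B B' C C')
    then show ?thesis using less.hyps[of B B'] less.hyps[of C C'] by simp
  next
    case (imp B B' C C')
    have "real cty dst dex s B p \<longleftrightarrow> real cty dst dex s B' p"
      and "real cty dst dex s C p \<longleftrightarrow> real cty dst dex s C' p" for p
      using imp less.hyps by auto
    moreover have "rty B = rty B'" using imp(3) by (rule fm_proj_red_rty)
    ultimately show ?thesis using imp by simp
  next
    case (all B B' x)
    have "real cty dst dex s (fsubst x u B) p \<longleftrightarrow> real cty dst dex s (fsubst x u B') p" for u p
      using all by (intro less.hyps) (simp_all add: fm_proj_red_fsubst_fm)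
    then show ?thesis using all by simp
  next
    case (ex B B' x)
    have "real cty dst dex s (fsubst x u B) p \<longleftrightarrow> real cty dst dex s (fsubst x u B') p" for u p
      using ex by (intro less.hyps) (simp_all add: fm_proj_red_fsubst_fm)
    then show ?thesis using ex by simp
  qed
qed

lemma real_Imp_realIR:
  "real cty dst dex s (Imp B C) r \<longleftrightarrow>
   (\<forall>p. closed p \<and> typing cty [] p (rty B) \<and> real cty dst dex s B p \<longrightarrow>
        realIR cty dst dex s C (App r p))"
  by (simp add: realIR_def)

lemma real_Forall_realIR:
  "real cty dst dex s (Forall x B) r \<longleftrightarrow>
   (\<forall>n. realIR cty dst dex s (fsubst x (numeral_t n) B) (App r (numeral_t n)))"
  by (simp add: realIR_def)

lemma realIR_expand:
  "App q s \<leadsto> App q' s \<Longrightarrow> realIR cty dst dex s A q' \<Longrightarrow> realIR cty dst dex s A q"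
  unfolding realIR_def using reduces_trans by blast

lemma real_proj_red_expand:
  "proj_red t t' \<Longrightarrow> real cty dst dex s A t' \<Longrightarrow> real cty dst dex s A t"
proof (induction "fsize A" arbitrary: A t t' rule: less_induct)
  case less
  have "t \<leadsto> t'" using less.prems(1) by (rule proj_red_reduces)
  then have app: "App (App t u) s \<leadsto> App (App t' u) s" for u
    by (intro reduces_AppL)
  have proj: "proj_red (App (Cst c) t) (App (Cst c) t')" for c
    using less.prems(1) by (intro proj_red.app proj_red.cst)
  show ?case
  proof (cases A)
    case (Atom P ts)
    then show ?thesis using less.prems \<open>t \<leadsto> t'\<close> reduces_trans by auto
  next
    case (Conj B C)
    then show ?thesis using less.prems less.hyps[of B] less.hyps[of C] proj by simp blast
  next
    case (Disj B C)
    then show ?thesis using less.prems \<open>t \<leadsto> t'\<close> reduces_trans by auto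
  next
    case (Imp B C)
    show ?thesis using less.prems(2) app realIR_expand unfolding Imp real_Imp_realIR by blast
  next
    case (Forall x B)
    show ?thesis using less.prems(2) app realIR_expand unfolding Forall real_Forall_realIR by blast
  next
    case (Exists x B)
    have "real cty dst dex s (fsubst x (App (Cst CFst) t') B) (App (Cst CSnd) t)"
    proof (rule less.hyps)
      show "fsize (fsubst x (App (Cst CFst) t') B) < fsize A" using Exists by simp
      show "real cty dst dex s (fsubst x (App (Cst CFst) t') B) (App (Cst CSnd) t')"
        using less.prems(2) Exists by simp
    qed (rule proj)
    moreover have "fm_proj_red (fsubst x (App (Cst CFst) t) B) (fsubst x (App (Cst CFst) t') B)"
      using proj by (rule fm_proj_red_fsubst)
    ultimately show ?thesis using Exists real_fm_proj_red_iff by (simp only: real.simps) blast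
  qed
qed

lemma real_Fst_Pair:
  "real cty dst dex s A a \<Longrightarrow> real cty dst dex s A (App (Cst CFst) (app2 (Cst CPair) a b))"
  by (rule real_proj_red_expand) (auto intro: proj_red.fst)

lemma real_Snd_Pair:
  "real cty dst dex s A b \<Longrightarrow> real cty dst dex s A (App (Cst CSnd) (app2 (Cst CPair) a b))"
  by (rule real_proj_red_expand) (auto intro: proj_red.snd)

section \<open>The monad operations\<close>

lemma reduces_Case: "a \<leadsto> a' \<Longrightarrow> app3 (Cst CCase) a f g \<leadsto> app3 (Cst CCase) a' f g"
  by (intro reduces_AppL reduces_AppR)

lemma reduces_Case_Inl:
  "a \<leadsto> App (Cst CInl) x \<Longrightarrow> app3 (Cst CCase) a (Lam f) g \<leadsto> subst f 0 x"
  using reduces_Case red1_reduces_trans[OF red1.case_inl red1_reduces_trans[OF red1.beta reduces_refl]]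
  by (rule reduces_trans)

lemma reduces_Case_Inr:
  "a \<leadsto> App (Cst CInr) e \<Longrightarrow> app3 (Cst CCase) a f (Lam g) \<leadsto> subst g 0 e"
  using reduces_Case red1_reduces_trans[OF red1.case_inr red1_reduces_trans[OF red1.beta reduces_refl]]
  by (rule reduces_trans)

lemma reduces_Case_Inr_Inr:
  "a \<leadsto> App (Cst CInr) e \<Longrightarrow> app3 (Cst CCase) a f (Cst CInr) \<leadsto> App (Cst CInr) e"
  using reduces_Case red1_reduces_trans[OF red1.case_inr reduces_refl]
  by (rule reduces_trans)

lemma reduces_beta: "subst t 0 u = v \<Longrightarrow> App (Lam t) u \<leadsto> v"
  using red1_reduces_trans[OF red1.beta reduces_refl] by blast

lemma unitT_reduces: "closed r \<Longrightarrow> App (App unitT r) s \<leadsto> App (Cst CInl) r"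
  unfolding unitT_def
  by (rule red1_reduces_trans[OF red1.appL[OF red1.beta]], simp, rule reduces_beta, simp)

lemma starT_reduces:
  "closed r \<Longrightarrow> closed p \<Longrightarrow> closed s \<Longrightarrow>
   App (app2 starT r p) s \<leadsto> app3 (Cst CCase) (App p s) (Lam (app2 r (Var 0) s)) (Cst CInr)"
  unfolding starT_def
  by (rule red1_reduces_trans[OF red1.appL[OF red1.appL[OF red1.beta]]], simp,
      rule red1_reduces_trans[OF red1.appL[OF red1.beta]], simp)
     (rule reduces_beta, simp)

lemma mergeT_reduces:
  "closed p \<Longrightarrow> closed q \<Longrightarrow> closed s \<Longrightarrow>
   App (app2 mergeT p q) s \<leadsto> app3 (Cst CCase) (App p s)
     (Lam (app3 (Cst CCase) (App q s)
              (Lam (App (Cst CInl) (app2 (Cst CPair) (Var 1) (Var 0))))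
              (Cst CInr)))
     (Lam (app3 (Cst CCase) (App q s)
              (Lam (App (Cst CInr) (Var 1)))
              (Lam (App (Cst CInr) (app2 (Cst CExmerge) (Var 1) (Var 0))))))"
  unfolding mergeT_def
  by (rule red1_reduces_trans[OF red1.appL[OF red1.appL[OF red1.beta]]], simp,
      rule red1_reduces_trans[OF red1.appL[OF red1.beta]], simp)
     (rule reduces_beta, simp)

lemma mergeT_Inl_reduces:
  assumes "closed p" "closed q" "closed s" "closed x" "App p s \<leadsto> App (Cst CInl) x"
  shows "App (app2 mergeT p q) s \<leadsto>
    app3 (Cst CCase) (App q s) (Lam (App (Cst CInl) (app2 (Cst CPair) x (Var 0)))) (Cst CInr)"
  using reduces_trans[OF mergeT_reduces[OF assms(1-3)] reduces_Case_Inl[OF assms(5)]] assms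
  by simp

lemma mergeT_Inr_reduces:
  assumes "closed p" "closed q" "closed s" "closed e" "App p s \<leadsto> App (Cst CInr) e"
  shows "App (app2 mergeT p q) s \<leadsto>
    app3 (Cst CCase) (App q s) (Lam (App (Cst CInr) e))
      (Lam (App (Cst CInr) (app2 (Cst CExmerge) e (Var 0))))"
  using reduces_trans[OF mergeT_reduces[OF assms(1-3)] reduces_Case_Inr[OF assms(5)]] assms
  by simp

lemma realIR_cases:
  assumes "realIR cty dst dex s A p"
  obtains (val) r where "App p s \<leadsto> App (Cst CInl) r" "real cty dst dex s A r"
    | (exc) e where "App p s \<leadsto> App (Cst CInr) e" "prop_extends dst dex e s"
  using assms unfolding realIR_def by blast

lemma realIR_val:
  "App p s \<leadsto> App (Cst CInl) r \<Longrightarrow> real cty dst dex s A r \<Longrightarrow> realIR cty dst dex s A p"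
  unfolding realIR_def by blast

lemma realIR_exc:
  "App p s \<leadsto> App (Cst CInr) e \<Longrightarrow> prop_extends dst dex e s \<Longrightarrow> realIR cty dst dex s A p"
  unfolding realIR_def by blast

lemma realIR_unitT:
  "closed r \<Longrightarrow> real cty dst dex s A r \<Longrightarrow> realIR cty dst dex s A (App unitT r)"
  using unitT_reduces by (rule realIR_val)

lemma realIR_starT:
  assumes "closed r" "closed p" "closed s"
    and "typing cty [] p (TM (rty B))" "typing cty [] s TState"
    and r: "real cty dst dex s (Imp B C) r" and p: "realIR cty dst dex s B p"
  shows "realIR cty dst dex s C (app2 starT r p)"
proof -
  have ps: "closed (App p s)" "typing cty [] (App p s) (TSum (rty B) TEx)"
    using assms(2-5) by (auto simp: closed_def TM_def intro: typing.intros)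
  note star = starT_reduces[OF assms(1-3)]
  from p show ?thesis
  proof (cases rule: realIR_cases)
    case (val x)
    have x: "closed x" "typing cty [] x (rty B)"
      using reduces_Inl_closed_typing[OF val(1) ps] by auto
    have "App (app2 starT r p) s \<leadsto> App (App r x) s"
      using reduces_trans[OF star reduces_Case_Inl[OF val(1)]] assms x by simp
    moreover have "realIR cty dst dex s C (App r x)"
      using r val(2) x unfolding real_Imp_realIR by blast
    ultimately show ?thesis by (rule realIR_expand)
  next
    case (exc e)
    have "App (app2 starT r p) s \<leadsto> App (Cst CInr) e"
      using star reduces_Case_Inr_Inr[OF exc(1)] by (rule reduces_trans)
    then show ?thesis using exc(2) by (rule realIR_exc)
  qed
qed

lemma realIR_mergeT_val:
  assumes "closed p" "closed q" "closed s" "closed x"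
    and p: "App p s \<leadsto> App (Cst CInl) x" "real cty dst dex s B x"
    and q: "realIR cty dst dex s C q"
  shows "realIR cty dst dex s (Conj B C) (app2 mergeT p q)"
  using q
proof (cases rule: realIR_cases)
  case (val y)
  have "App (app2 mergeT p q) s \<leadsto> App (Cst CInl) (app2 (Cst CPair) x y)"
    using reduces_trans[OF mergeT_Inl_reduces[OF assms(1-4) p(1)] reduces_Case_Inl[OF val(1)]]
      \<open>closed x\<close> by simp
  moreover have "real cty dst dex s (Conj B C) (app2 (Cst CPair) x y)"
    using real_Fst_Pair[OF p(2)] real_Snd_Pair[OF val(2)] by simp
  ultimately show ?thesis by (rule realIR_val)
next
  case (exc e)
  have "App (app2 mergeT p q) s \<leadsto> App (Cst CInr) e"
    using mergeT_Inl_reduces[OF assms(1-4) p(1)] reduces_Case_Inr_Inr[OF exc(1)]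
    by (rule reduces_trans)
  then show ?thesis using exc(2) by (rule realIR_exc)
qed

lemma realIR_mergeT_exc:
  assumes "closed p" "closed q" "closed s" "closed e1" "typing cty [] e1 TEx"
    and "typing cty [] q (TM (rty C))" "typing cty [] s TState"
    and p: "App p s \<leadsto> App (Cst CInr) e1" "prop_extends dst dex e1 s"
    and q: "realIR cty dst dex s C q"
    and EX: "\<And>e2. closed e2 \<Longrightarrow> typing cty [] e2 TEx \<Longrightarrow> prop_extends dst dex e2 s \<Longrightarrow>
                   prop_extends dst dex (app2 (Cst CExmerge) e1 e2) s"
  shows "realIR cty dst dex s (Conj B C) (app2 mergeT p q)"
proof -
  have qs: "closed (App q s)" "typing cty [] (App q s) (TSum (rty C) TEx)"
    using assms(2,3,6,7) by (auto simp: closed_def TM_def intro: typing.intros)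
  note m = mergeT_Inr_reduces[OF assms(1-4) p(1)]
  from q show ?thesis
  proof (cases rule: realIR_cases)
    case (val y)
    have "App (app2 mergeT p q) s \<leadsto> App (Cst CInr) e1"
      using reduces_trans[OF m reduces_Case_Inl[OF val(1)]] \<open>closed e1\<close> by simp
    then show ?thesis using p(2) by (rule realIR_exc)
  next
    case (exc e2)
    have "App (app2 mergeT p q) s \<leadsto> App (Cst CInr) (app2 (Cst CExmerge) e1 e2)"
      using reduces_trans[OF m reduces_Case_Inr[OF exc(1)]] \<open>closed e1\<close> by simp
    moreover have "prop_extends dst dex (app2 (Cst CExmerge) e1 e2) s"
      using reduces_Inr_closed_typing[OF exc(1) qs] exc(2) EX by blast
    ultimately show ?thesis by (rule realIR_exc)
  qed
qed

lemma realIR_mergeT: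
  assumes "closed p" "closed q" "closed s"
    and "typing cty [] p (TM (rty B))" "typing cty [] q (TM (rty C))" "typing cty [] s TState"
    and p: "realIR cty dst dex s B p" and q: "realIR cty dst dex s C q"
    and EX: "\<And>e1 e2. closed e1 \<Longrightarrow> typing cty [] e1 TEx \<Longrightarrow> closed e2 \<Longrightarrow> typing cty [] e2 TEx \<Longrightarrow>
                 prop_extends dst dex e1 s \<Longrightarrow> prop_extends dst dex e2 s \<Longrightarrow>
                 prop_extends dst dex (app2 (Cst CExmerge) e1 e2) s"
  shows "realIR cty dst dex s (Conj B C) (app2 mergeT p q)"
proof -
  have ps: "closed (App p s)" "typing cty [] (App p s) (TSum (rty B) TEx)"
    using assms(1,3,4,6) by (auto simp: closed_def TM_def intro: typing.intros)
  from p show ?thesis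
  proof (cases rule: realIR_cases)
    case (val x)
    then show ?thesis
      using realIR_mergeT_val assms(1-3) reduces_Inl_closed_typing[OF val(1) ps] q by blast
  next
    case (exc e1)
    then show ?thesis
      using realIR_mergeT_exc[OF assms(1-3) _ _ assms(5,6) exc q] EX
        reduces_Inr_closed_typing[OF exc(1) ps] by blast
  qed
qed

theorem mainTheorem4:
  fixes cty :: "'c \<Rightarrow> ty"
    and dst :: "'c trm \<Rightarrow> state"
    and dex :: "'c trm \<Rightarrow> state \<rightharpoonup> state"
  assumes states_sound:
      "\<forall>s. closed s \<and> typing cty [] s TState \<longrightarrow> is_state (dst s)"
    and exceptions_extend:
      "\<forall>e \<sigma> \<sigma>'. closed e \<and> typing cty [] e TEx \<and> is_state \<sigma> \<and> dex e \<sigma> = Some \<sigma>'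
                 \<longrightarrow> is_state \<sigma>' \<and> \<sigma> \<subseteq>\<^sub>m \<sigma>'"
    and EX:
      "\<forall>s e1 e2. closed s \<and> typing cty [] s TState \<and>
                 closed e1 \<and> typing cty [] e1 TEx \<and> closed e2 \<and> typing cty [] e2 TEx \<and>
                 prop_extends dst dex e1 s \<and> prop_extends dst dex e2 s
                 \<longrightarrow> prop_extends dst dex (app2 (Cst CExmerge) e1 e2) s"
  shows
    "\<forall>s. closed s \<and> typing cty [] s TState \<longrightarrow>
       (\<forall>A r. closed_fm A \<and> closed r \<and> typing cty [] r (rty A) \<and>
              real cty dst dex s A r
              \<longrightarrow> realIR cty dst dex s A (App unitT r)) \<and>
       (\<forall>B C r p. closed_fm B \<and> closed_fm C \<and>
              closed r \<and> typing cty [] r (rty (Imp B C)) \<and>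
              closed p \<and> typing cty [] p (TM (rty B)) \<and>
              real cty dst dex s (Imp B C) r \<and> realIR cty dst dex s B p
              \<longrightarrow> realIR cty dst dex s C (app2 starT r p)) \<and>
       (\<forall>B C p q. closed_fm B \<and> closed_fm C \<and>
              closed p \<and> typing cty [] p (TM (rty B)) \<and>
              closed q \<and> typing cty [] q (TM (rty C)) \<and>
              realIR cty dst dex s B p \<and> realIR cty dst dex s C q
              \<longrightarrow> realIR cty dst dex s (Conj B C) (app2 mergeT p q))"
  \<comment> \<open>Only (EX) is needed.\<close>
proof (intro allI impI, intro conjI)
  fix s
  assume s: "closed s \<and> typing cty [] s TState"
  show "\<forall>A r. closed_fm A \<and> closed r \<and> typing cty [] r (rty A) \<and> real cty dst dex s A r
          \<longrightarrow> realIR cty dst dex s A (App unitT r)"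
    using realIR_unitT by blast
  show "\<forall>B C r p. closed_fm B \<and> closed_fm C \<and> closed r \<and> typing cty [] r (rty (Imp B C)) \<and>
          closed p \<and> typing cty [] p (TM (rty B)) \<and>
          real cty dst dex s (Imp B C) r \<and> realIR cty dst dex s B p
          \<longrightarrow> realIR cty dst dex s C (app2 starT r p)"
    using realIR_starT s by blast
  show "\<forall>B C p q. closed_fm B \<and> closed_fm C \<and> closed p \<and> typing cty [] p (TM (rty B)) \<and>
          closed q \<and> typing cty [] q (TM (rty C)) \<and>
          realIR cty dst dex s B p \<and> realIR cty dst dex s C q
          \<longrightarrow> realIR cty dst dex s (Conj B C) (app2 mergeT p q)"
    using realIR_mergeT[where s = s] s EX by blast
qed

end
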